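(* Let $I\subset\mathbb{R}$ be an interval, $\psi:I\to\mathbb{R}$ a non-decreasing convex function, $n\ge2$, and $a=(a_1,\dots,a_n)\in I^n$ a convex sequence (i.e. $(\Delta a_i)_{i=1}^{n-1}$ non-decreasing). Let $p=(p_1,\dots,p_n)\in[0,\infty)^n$ with $P_n=\sum p_i>0$ and $\frac1{P_n}\sum_{i=1}^n p_i i<n$. Set $m=\left\lfloor \frac1{P_n}\sum_{i=1}^n p_i i\right\rfloor$ (ordinary floor) and, for integers $u<v$, $$\Phi(u,v)=\Big(\sum_{i=1}^n\frac{i-u}{v-u}p_i\Big)\psi(a_v)+\Big(\sum_{i=1}^n\frac{v-i}{v-u}p_i\Big)\psi(a_u).$$ Then $$\Phi(m,m+1)\le\sum_{i=1}^n p_i\psi(a_i)\le\Phi(1,n).$$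
   Context: For a real sequence $(x_i)$, $\Delta x_i=x_{i+1}-x_i$. *)

theory Defs
  imports "HOL-Analysis.Analysis"
begin

text \<open>Phi(u,v) for indices u < v; sequences are indexed 1..n as functions nat => real.\<close>
definition Phi :: "nat \<Rightarrow> (nat \<Rightarrow> real) \<Rightarrow> (real \<Rightarrow> real) \<Rightarrow> (nat \<Rightarrow> real) \<Rightarrow> int \<Rightarrow> int \<Rightarrow> real" where
  "Phi n p \<psi> a u v =
     (\<Sum>i=1..n. (real i - real_of_int u) / real_of_int (v - u) * p i) * \<psi> (a (nat v))
   + (\<Sum>i=1..n. (real_of_int v - real i) / real_of_int (v - u) * p i) * \<psi> (a (nat u))"

end

theory Submission
  imports Defs
begin

text \<open>Since \<open>\<psi>\<close> is non-decreasing and convex, \<open>\<psi>(a\<^sub>i)\<close> is again a convex sequence: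
  \<open>a\<^sub>i\<^sub>+\<^sub>1\<close> lies below the midpoint of \<open>a\<^sub>i\<close> and \<open>a\<^sub>i\<^sub>+\<^sub>2\<close>. Telescoping the non-decreasing
  differences shows that a convex sequence lies above the line through any two consecutive
  terms and below its chord from \<open>1\<close> to \<open>n\<close>. Now \<open>\<Phi>(u,v)\<close> is the \<open>p\<close>-weighted sum of the
  values at \<open>i\<close> of the line through the terms with indices \<open>u\<close> and \<open>v\<close>, so the lower bound
  holds for every \<open>1 \<le> k < n\<close>; the hypothesis on the weighted mean only ensures that \<open>m\<close> is
  such a \<open>k\<close>.\<close>

definition fwd_diff :: "(nat \<Rightarrow> real) \<Rightarrow> nat \<Rightarrow> real" where
  "fwd_diff b i = b (Suc i) - b i"

definition convex_seq :: "nat \<Rightarrow> (nat \<Rightarrow> real) \<Rightarrow> bool" where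
  "convex_seq n b \<longleftrightarrow> (\<forall>i. 1 \<le> i \<longrightarrow> i + 2 \<le> n \<longrightarrow> fwd_diff b i \<le> fwd_diff b (Suc i))"

lemma convex_seq_fwd_diff_mono:
  assumes "convex_seq n b" "1 \<le> i" "i \<le> j" "j < n"
  shows "fwd_diff b i \<le> fwd_diff b j"
  using assms(3,4)
proof (induction j rule: dec_induct)
  case (step j)
  then have "fwd_diff b j \<le> fwd_diff b (Suc j)"
    using assms(1,2) unfolding convex_seq_def by simp
  with step show ?case by simp
qed simp

lemma sum_fwd_diff: "i \<le> j \<Longrightarrow> (\<Sum>l=i..<j. fwd_diff b l) = b j - b i"
  unfolding fwd_diff_def by (induction j rule: dec_induct) simp_all

lemma convex_seq_secant_bounds:
  assumes b: "convex_seq n b" and ij: "1 \<le> i" "i \<le> j" "j \<le> n"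
  shows "(real j - real i) * fwd_diff b i \<le> b j - b i"
    and "b j - b i \<le> (real j - real i) * fwd_diff b (j - 1)"
proof -
  have "(real j - real i) * fwd_diff b i \<le> (\<Sum>l=i..<j. fwd_diff b l)"
    using sum_bounded_below[of "{i..<j}" "fwd_diff b i" "fwd_diff b"]
      convex_seq_fwd_diff_mono[OF b] ij by (simp add: of_nat_diff)
  then show "(real j - real i) * fwd_diff b i \<le> b j - b i"
    using sum_fwd_diff[OF ij(2)] by simp
  have "fwd_diff b l \<le> fwd_diff b (j - 1)" if "l \<in> {i..<j}" for l
    using convex_seq_fwd_diff_mono[OF b, of l "j - 1"] that ij by auto
  then have "(\<Sum>l=i..<j. fwd_diff b l) \<le> (real j - real i) * fwd_diff b (j - 1)"
    using sum_bounded_above[of "{i..<j}" "fwd_diff b" "fwd_diff b (j - 1)"] ij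
    by (simp add: of_nat_diff)
  then show "b j - b i \<le> (real j - real i) * fwd_diff b (j - 1)"
    using sum_fwd_diff[OF ij(2)] by simp
qed

lemma convex_seq_above_tangent:
  assumes b: "convex_seq n b" and k: "1 \<le> k" "k < n" and i: "1 \<le> i" "i \<le> n"
  shows "b k + (real i - real k) * fwd_diff b k \<le> b i"
proof (cases "k \<le> i")
  case True
  then show ?thesis using convex_seq_secant_bounds(1)[OF b k(1) True i(2)] by simp
next
  case False
  have "b k - b i \<le> (real k - real i) * fwd_diff b (k - 1)"
    using convex_seq_secant_bounds(2)[OF b i(1), of k] False k by simp
  also have "\<dots> \<le> (real k - real i) * fwd_diff b k"
    using convex_seq_fwd_diff_mono[OF b, of "k - 1" k] False i k
    by (intro mult_left_mono) auto
  finally show ?thesis by (simp add: algebra_simps)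
qed

lemma convex_seq_below_chord:
  assumes b: "convex_seq n b" and i: "1 \<le> i" "i \<le> n"
  shows "(real n - 1) * b i \<le> (real i - 1) * b n + (real n - real i) * b 1"
proof (cases "i = 1 \<or> i = n")
  case True
  then show ?thesis by (auto simp: algebra_simps)
next
  case False
  then have i': "2 \<le> i" "i < n" using i by auto
  have "(real n - real i) * (b i - b 1)
      \<le> (real n - real i) * ((real i - 1) * fwd_diff b (i - 1))"
    using convex_seq_secant_bounds(2)[OF b order_refl i] i' by (intro mult_left_mono) auto
  also have "\<dots> \<le> (real n - real i) * ((real i - 1) * fwd_diff b i)"
    using convex_seq_fwd_diff_mono[OF b, of "i - 1" i] i'
    by (intro mult_left_mono) auto
  also have "\<dots> = (real i - 1) * ((real n - real i) * fwd_diff b i)"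
    by simp
  also have "\<dots> \<le> (real i - 1) * (b n - b i)"
    using convex_seq_secant_bounds(1)[OF b i(1) i(2) order_refl] i'
    by (intro mult_left_mono) auto
  finally show ?thesis by (simp add: algebra_simps)
qed

lemma convex_seq_mono_convex_comp:
  assumes I: "is_interval I" and mono: "mono_on I \<psi>" and conv: "convex_on I \<psi>"
    and aI: "\<And>i. 1 \<le> i \<Longrightarrow> i \<le> n \<Longrightarrow> a i \<in> I" and a: "convex_seq n a"
  shows "convex_seq n (\<psi> \<circ> a)"
  unfolding convex_seq_def
proof (intro allI impI)
  fix i assume i: "1 \<le> i" "i + 2 \<le> n"
  have x: "a i \<in> I" "a (i + 2) \<in> I" "a (i + 1) \<in> I" using aI i by auto
  define mid where "mid = (1 - 1/2) *\<^sub>R a i + (1/2) *\<^sub>R a (i + 2)"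
  have "mid \<in> I"
    unfolding mid_def using convexD_alt[OF is_interval_convex[OF I] x(1,2), of "1/2"] by simp
  moreover have "a (i + 1) \<le> mid"
    using a i unfolding convex_seq_def fwd_diff_def mid_def by (auto simp: numeral_2_eq_2)
  ultimately have "\<psi> (a (i + 1)) \<le> \<psi> mid" using mono x by (auto intro: mono_onD)
  also have "\<psi> mid \<le> (1 - 1/2) * \<psi> (a i) + (1/2) * \<psi> (a (i + 2))"
    unfolding mid_def using convex_onD[OF conv, of "1/2"] x by simp
  finally show "fwd_diff (\<psi> \<circ> a) i \<le> fwd_diff (\<psi> \<circ> a) (Suc i)"
    by (simp add: fwd_diff_def numeral_2_eq_2)
qed

lemma Phi_eq_sum_secant:
  "Phi n p \<psi> a u v = (\<Sum>i=1..n. p i *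
     (((real i - u) * \<psi> (a (nat v)) + (v - real i) * \<psi> (a (nat u))) / (v - u)))"
  unfolding Phi_def sum_distrib_right sum.distrib[symmetric]
  by (intro sum.cong refl) (simp add: add_divide_distrib diff_divide_distrib algebra_simps)

lemma Phi_consecutive_le_weighted_sum:
  assumes b: "convex_seq n (\<psi> \<circ> a)" and p: "\<And>i. 1 \<le> i \<Longrightarrow> i \<le> n \<Longrightarrow> 0 \<le> p i"
    and k: "1 \<le> k" "k < n"
  shows "Phi n p \<psi> a (int k) (int k + 1) \<le> (\<Sum>i=1..n. p i * \<psi> (a i))"
proof -
  have "Phi n p \<psi> a (int k) (int k + 1)
      = (\<Sum>i=1..n. p i * (\<psi> (a k) + (real i - real k) * fwd_diff (\<psi> \<circ> a) k))"
    unfolding Phi_eq_sum_secant fwd_diff_def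
    by (intro sum.cong refl) (simp add: nat_add_distrib algebra_simps)
  also have "\<dots> \<le> (\<Sum>i=1..n. p i * \<psi> (a i))"
    using convex_seq_above_tangent[OF b k] p by (intro sum_mono mult_left_mono) simp_all
  finally show ?thesis .
qed

lemma weighted_sum_le_Phi_1_n:
  assumes b: "convex_seq n (\<psi> \<circ> a)" and p: "\<And>i. 1 \<le> i \<Longrightarrow> i \<le> n \<Longrightarrow> 0 \<le> p i"
    and n: "2 \<le> n"
  shows "(\<Sum>i=1..n. p i * \<psi> (a i)) \<le> Phi n p \<psi> a 1 (int n)"
proof -
  have "\<psi> (a i) \<le> ((real i - 1) * \<psi> (a n) + (real n - real i) * \<psi> (a 1)) / (real n - 1)"
    if "i \<in> {1..n}" for i
    using convex_seq_below_chord[OF b, of i] that n by (simp add: pos_le_divide_eq mult.commute)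
  then have "(\<Sum>i=1..n. p i * \<psi> (a i))
      \<le> (\<Sum>i=1..n. p i * (((real i - 1) * \<psi> (a n) + (real n - real i) * \<psi> (a 1)) / (real n - 1)))"
    using p by (intro sum_mono mult_left_mono) auto
  also have "\<dots> = Phi n p \<psi> a 1 (int n)"
    unfolding Phi_eq_sum_secant by simp
  finally show ?thesis .
qed

theorem corollary4p4:
  fixes I :: "real set" and \<psi> :: "real \<Rightarrow> real" and n :: nat
    and a p :: "nat \<Rightarrow> real"
  assumes I: "is_interval I"
    and mono: "mono_on I \<psi>" and conv: "convex_on I \<psi>"
    and n: "n \<ge> 2"
    and aI: "\<And>i. 1 \<le> i \<Longrightarrow> i \<le> n \<Longrightarrow> a i \<in> I"
    and aconv: "\<And>i. 1 \<le> i \<Longrightarrow> i + 2 \<le> n \<Longrightarrow> a (i + 1) - a i \<le> a (i + 2) - a (i + 1)"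
    and pnn: "\<And>i. 1 \<le> i \<Longrightarrow> i \<le> n \<Longrightarrow> p i \<ge> 0"
    and Ppos: "(\<Sum>i=1..n. p i) > 0"
    and mean: "(\<Sum>i=1..n. p i * real i) / (\<Sum>i=1..n. p i) < real n"
  defines "m \<equiv> \<lfloor>(\<Sum>i=1..n. p i * real i) / (\<Sum>i=1..n. p i)\<rfloor>"
  shows "Phi n p \<psi> a m (m + 1) \<le> (\<Sum>i=1..n. p i * \<psi> (a i))
       \<and> (\<Sum>i=1..n. p i * \<psi> (a i)) \<le> Phi n p \<psi> a 1 (int n)"
proof -
  have "convex_seq n a"
    using aconv unfolding convex_seq_def fwd_diff_def by (simp add: numeral_2_eq_2)
  then have b: "convex_seq n (\<psi> \<circ> a)"
    using convex_seq_mono_convex_comp[OF I mono conv] aI by blast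
  have "p i \<le> p i * real i" if "i \<in> {1..n}" for i
    using mult_left_mono[of 1 "real i" "p i"] pnn[of i] that by simp
  then have "(\<Sum>i=1..n. p i) \<le> (\<Sum>i=1..n. p i * real i)"
    by (rule sum_mono)
  then have "1 \<le> m"
    unfolding m_def using Ppos by (simp add: le_floor_iff le_divide_eq)
  moreover have "m < int n"
    unfolding m_def using mean by (simp add: floor_less_iff)
  ultimately obtain k where m: "m = int k" and k: "1 \<le> k" "k < n"
    using nonneg_int_cases[of m] by fastforce
  show ?thesis
    using Phi_consecutive_le_weighted_sum[OF b pnn k] weighted_sum_le_Phi_1_n[OF b pnn n] unfolding m by simp
qed

end
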